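(* Let $H$ be a finite graph of girth at least $5$ and minimum degree at least $4$. Then for every $t\in\mathbb N$, every proper layered wheel $W$ of girth at least $5$ contains an $H$-free induced subgraph of treewidth at least $t$.
   Context: A layered wheel is a countably infinite graph $W$ on the same vertex set as a countably infinite, locally finite rooted tree $T$ embedded in the plane, such that: (1) for every natural number $n$, the set $L_n$ (layer) of nodes at distance $n$ from the root induces in $W$ a finite path visiting $L_n$ in the left-to-right order of the embedding; edges inside layers form the set $E_L$; (2) every edge not in $E_L$ joins two nodes in ancestor–descendant relation in $T$; (3) there is a finite bound on the length of paths in $T$ consisting only of degree-$2$ nodes of $T$. $W$ is proper if for every $i\neq j$ there is at least one edge of $W$ between $L_i$ and $L_j$. A graph is $H$-free if no induced subgraph is isomorphic to $H$. The girth is the length of a shortest cycle. *)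

theory Defs
  imports Main "HOL-Library.Countable_Set"
begin

definition graph :: "'a set \<Rightarrow> ('a \<Rightarrow> 'a \<Rightarrow> bool) \<Rightarrow> bool" where
  "graph V E \<longleftrightarrow> (\<forall>u v. E u v \<longrightarrow> u \<in> V \<and> v \<in> V \<and> u \<noteq> v \<and> E v u)"

definition is_cycle :: "('a \<Rightarrow> 'a \<Rightarrow> bool) \<Rightarrow> 'a list \<Rightarrow> bool" where
  "is_cycle E xs \<longleftrightarrow> 3 \<le> length xs \<and> distinct xs \<and> successively E xs \<and> E (last xs) (hd xs)"

definition girth_at_least :: "('a \<Rightarrow> 'a \<Rightarrow> bool) \<Rightarrow> nat \<Rightarrow> bool" where
  "girth_at_least E g \<longleftrightarrow> (\<forall>xs. is_cycle E xs \<longrightarrow> g \<le> length xs)"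

definition connected_on :: "('a \<Rightarrow> 'a \<Rightarrow> bool) \<Rightarrow> 'a set \<Rightarrow> bool" where
  "connected_on E X \<longleftrightarrow> (\<forall>x\<in>X. \<forall>y\<in>X. \<exists>xs. xs \<noteq> [] \<and> hd xs = x \<and> last xs = y
      \<and> set xs \<subseteq> X \<and> successively E xs)"

definition min_degree_at_least :: "'a set \<Rightarrow> ('a \<Rightarrow> 'a \<Rightarrow> bool) \<Rightarrow> nat \<Rightarrow> bool" where
  "min_degree_at_least V E d \<longleftrightarrow> (\<forall>v\<in>V. d \<le> card {u\<in>V. E v u})"

definition induced_copy :: "'b set \<Rightarrow> ('b \<Rightarrow> 'b \<Rightarrow> bool) \<Rightarrow> 'a set \<Rightarrow> ('a \<Rightarrow> 'a \<Rightarrow> bool) \<Rightarrow> bool" where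
  "induced_copy VH EH S E \<longleftrightarrow> (\<exists>f. inj_on f VH \<and> f ` VH \<subseteq> S \<and>
      (\<forall>a\<in>VH. \<forall>b\<in>VH. EH a b \<longleftrightarrow> E (f a) (f b)))"

definition H_free :: "'b set \<Rightarrow> ('b \<Rightarrow> 'b \<Rightarrow> bool) \<Rightarrow> 'a set \<Rightarrow> ('a \<Rightarrow> 'a \<Rightarrow> bool) \<Rightarrow> bool" where
  "H_free VH EH S E \<longleftrightarrow> \<not> induced_copy VH EH S E"

text \<open>The decomposition tree has nodes N (a finite set of naturals) and edge relation TE.
  The graph considered is the one induced by E on V.\<close>
definition tree_decomp :: "'a set \<Rightarrow> ('a \<Rightarrow> 'a \<Rightarrow> bool) \<Rightarrow> nat set \<Rightarrow> (nat \<Rightarrow> nat \<Rightarrow> bool)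
    \<Rightarrow> (nat \<Rightarrow> 'a set) \<Rightarrow> bool" where
  "tree_decomp V E N TE B \<longleftrightarrow>
     finite N \<and> N \<noteq> {} \<and> graph N TE \<and> connected_on TE N \<and> (\<forall>xs. \<not> is_cycle TE xs) \<and>
     (\<forall>x\<in>N. B x \<subseteq> V) \<and>
     (\<forall>v\<in>V. \<exists>x\<in>N. v \<in> B x) \<and>
     (\<forall>u\<in>V. \<forall>v\<in>V. E u v \<longrightarrow> (\<exists>x\<in>N. u \<in> B x \<and> v \<in> B x)) \<and>
     (\<forall>v\<in>V. connected_on TE {x\<in>N. v \<in> B x})"

definition treewidth :: "'a set \<Rightarrow> ('a \<Rightarrow> 'a \<Rightarrow> bool) \<Rightarrow> nat" where
  "treewidth V E = (LEAST k. \<exists>N TE B. tree_decomp V E N TE B \<and> (\<forall>x\<in>N. card (B x) \<le> k + 1))"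

definition rooted_tree :: "'a set \<Rightarrow> 'a \<Rightarrow> ('a \<Rightarrow> 'a) \<Rightarrow> bool" where
  "rooted_tree V r par \<longleftrightarrow> r \<in> V \<and> par r = r \<and> (\<forall>v\<in>V. par v \<in> V) \<and>
     (\<forall>v\<in>V. \<exists>n. (par ^^ n) v = r)"

definition depth :: "'a \<Rightarrow> ('a \<Rightarrow> 'a) \<Rightarrow> 'a \<Rightarrow> nat" where
  "depth r par v = (LEAST n. (par ^^ n) v = r)"

definition layer :: "'a set \<Rightarrow> 'a \<Rightarrow> ('a \<Rightarrow> 'a) \<Rightarrow> nat \<Rightarrow> 'a set" where
  "layer V r par n = {v\<in>V. depth r par v = n}"

definition tadj :: "'a \<Rightarrow> ('a \<Rightarrow> 'a) \<Rightarrow> 'a \<Rightarrow> 'a \<Rightarrow> bool" where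
  "tadj r par u v \<longleftrightarrow> (u \<noteq> r \<and> par u = v) \<or> (v \<noteq> r \<and> par v = u)"

definition tdeg :: "'a set \<Rightarrow> 'a \<Rightarrow> ('a \<Rightarrow> 'a) \<Rightarrow> 'a \<Rightarrow> nat" where
  "tdeg V r par v = card {u\<in>V. tadj r par v u}"

definition ancestor :: "('a \<Rightarrow> 'a) \<Rightarrow> 'a \<Rightarrow> 'a \<Rightarrow> bool" where
  "ancestor par u v \<longleftrightarrow> (\<exists>k. (par ^^ k) v = u)"

text \<open>A plane embedding of the rooted tree, recorded through the induced left-to-right
  orders: lt is a strict linear order on each layer, and children of different parents
  are ordered as their parents are.\<close>
definition plane_order :: "'a set \<Rightarrow> 'a \<Rightarrow> ('a \<Rightarrow> 'a) \<Rightarrow> ('a \<Rightarrow> 'a \<Rightarrow> bool) \<Rightarrow> bool" where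
  "plane_order V r par lt \<longleftrightarrow>
     (\<forall>n. (\<forall>u\<in>layer V r par n. \<not> lt u u) \<and>
          (\<forall>u\<in>layer V r par n. \<forall>v\<in>layer V r par n. \<forall>w\<in>layer V r par n.
              lt u v \<longrightarrow> lt v w \<longrightarrow> lt u w) \<and>
          (\<forall>u\<in>layer V r par n. \<forall>v\<in>layer V r par n. u = v \<or> lt u v \<or> lt v u)) \<and>
     (\<forall>n. \<forall>u\<in>layer V r par (Suc n). \<forall>v\<in>layer V r par (Suc n).
          par u \<noteq> par v \<longrightarrow> lt u v \<longrightarrow> lt (par u) (par v))"

definition consecutive :: "('a \<Rightarrow> 'a \<Rightarrow> bool) \<Rightarrow> 'a set \<Rightarrow> 'a \<Rightarrow> 'a \<Rightarrow> bool" where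
  "consecutive lt L u v \<longleftrightarrow> lt u v \<and> \<not> (\<exists>w\<in>L. lt u w \<and> lt w v)"

definition layered_wheel :: "'a set \<Rightarrow> ('a \<Rightarrow> 'a \<Rightarrow> bool) \<Rightarrow> 'a \<Rightarrow> ('a \<Rightarrow> 'a)
    \<Rightarrow> ('a \<Rightarrow> 'a \<Rightarrow> bool) \<Rightarrow> bool" where
  "layered_wheel V E r par lt \<longleftrightarrow>
     graph V E \<and> rooted_tree V r par \<and> infinite V \<and> countable V \<and>
     (\<forall>v\<in>V. finite {u\<in>V. tadj r par v u}) \<and>
     plane_order V r par lt \<and>
     (\<forall>n. finite (layer V r par n) \<and>
        (\<forall>u\<in>layer V r par n. \<forall>v\<in>layer V r par n.
           E u v \<longleftrightarrow> consecutive lt (layer V r par n) u v \<or> consecutive lt (layer V r par n) v u)) \<and>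
     (\<forall>u v. E u v \<and> depth r par u \<noteq> depth r par v \<longrightarrow> ancestor par u v \<or> ancestor par v u) \<and>
     (\<exists>b. \<forall>xs. distinct xs \<and> set xs \<subseteq> V \<and> successively (tadj r par) xs \<and>
          (\<forall>x\<in>set xs. tdeg V r par x = 2) \<longrightarrow> length xs \<le> b)"

definition proper_lw :: "'a set \<Rightarrow> ('a \<Rightarrow> 'a \<Rightarrow> bool) \<Rightarrow> 'a \<Rightarrow> ('a \<Rightarrow> 'a) \<Rightarrow> bool" where
  "proper_lw V E r par \<longleftrightarrow>
     (\<forall>i j. i \<noteq> j \<longrightarrow> (\<exists>u\<in>layer V r par i. \<exists>v\<in>layer V r par j. E u v))"

end

(*
  Pick layers L_{i_0}, ..., L_{i_t} of W one at a time so that every vertex of a chosen layer has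
  at most one neighbour in the earlier chosen layers. This is possible because girth at least 5
  means that two vertices have at most one common neighbour, so only finitely many vertices have
  two neighbours in the finite union chosen so far, and these lie in finitely many layers.
  Let S be the union of the chosen layers.

  Each layer induces a path and, W being proper, any two layers are joined by an edge; so the
  chosen layers are the branch sets of a K_{t+1} minor of S. In a tree decomposition the nodes
  whose bags meet a branch set form pairwise intersecting subtrees, and by the Helly property of
  subtrees some bag meets all t+1 of them; hence the treewidth of S is at least t.

  A vertex of S has at most two neighbours in its own layer and at most one in earlier chosen
  layers. In an induced copy of H inside S, the vertex lying in the deepest layer would thus have
  degree at most 3, contradicting minimum degree 4.
*)
theory Submission
  imports Defs
begin

section \<open>Connectivity as reflexive transitive closure\<close>

definition induced_rel :: "('a \<Rightarrow> 'a \<Rightarrow> bool) \<Rightarrow> 'a set \<Rightarrow> 'a \<Rightarrow> 'a \<Rightarrow> bool" where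
  "induced_rel E X a b \<longleftrightarrow> a \<in> X \<and> b \<in> X \<and> E a b"

lemma rtranclp_induced_rel_if_path:
  assumes "successively E xs" "set xs \<subseteq> X" "xs \<noteq> []"
  shows "(induced_rel E X)\<^sup>*\<^sup>* (hd xs) (last xs)"
  using assms
proof (induction xs rule: induct_list012)
  case (3 a b xs)
  have "induced_rel E X a b"
    using "3.prems" by (simp add: induced_rel_def)
  moreover have "(induced_rel E X)\<^sup>*\<^sup>* b (last (b # xs))"
    using "3.IH"(2) "3.prems" by simp
  ultimately show ?case
    by (simp add: converse_rtranclp_into_rtranclp)
qed simp_all

lemma path_if_rtranclp_induced_rel:
  assumes "(induced_rel E X)\<^sup>*\<^sup>* a b" "a \<in> X"
  shows "\<exists>xs. xs \<noteq> [] \<and> hd xs = a \<and> last xs = b \<and> set xs \<subseteq> X \<and> successively E xs"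
  using assms
proof (induction rule: converse_rtranclp_induct)
  case base
  then show ?case by (intro exI[of _ "[b]"]) auto
next
  case (step a c)
  then obtain xs where "xs \<noteq> []" "hd xs = c" "last xs = b" "set xs \<subseteq> X" "successively E xs"
    by (auto simp: induced_rel_def)
  with step.hyps(1) show ?case
    by (intro exI[of _ "a # xs"]) (auto simp: induced_rel_def successively_Cons)
qed

lemma connected_on_iff_rtranclp:
  "connected_on E X \<longleftrightarrow> (\<forall>x\<in>X. \<forall>y\<in>X. (induced_rel E X)\<^sup>*\<^sup>* x y)"
  unfolding connected_on_def
  using rtranclp_induced_rel_if_path path_if_rtranclp_induced_rel by metis

lemma rtranclp_induced_rel_mono:
  "(induced_rel E X)\<^sup>*\<^sup>* a b \<Longrightarrow> X \<subseteq> Y \<Longrightarrow> (induced_rel E Y)\<^sup>*\<^sup>* a b"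
  by (erule rtranclp_mono[THEN predicate2D, rotated]) (auto simp: induced_rel_def)

lemma induced_rel_induced_rel:
  "X \<subseteq> Y \<Longrightarrow> induced_rel (induced_rel E Y) X = induced_rel E X"
  by (auto simp: induced_rel_def fun_eq_iff)

lemma connected_on_induced_rel_iff:
  "X \<subseteq> Y \<Longrightarrow> connected_on (induced_rel E Y) X \<longleftrightarrow> connected_on E X"
  by (simp add: connected_on_iff_rtranclp induced_rel_induced_rel)

lemma graph_edgeD:
  assumes "graph V E" "E u v"
  shows "u \<in> V" "v \<in> V" "u \<noteq> v" "E v u"
  using assms by (auto simp: graph_def)

lemma graph_symp: "graph V E \<Longrightarrow> symp E"
  by (auto simp: graph_def intro: sympI)

section \<open>Finite trees and the Helly property of subtrees\<close>

definition finite_tree :: "'a set \<Rightarrow> ('a \<Rightarrow> 'a \<Rightarrow> bool) \<Rightarrow> bool" where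
  "finite_tree N TE \<longleftrightarrow>
     finite N \<and> N \<noteq> {} \<and> graph N TE \<and> connected_on TE N \<and> (\<forall>xs. \<not> is_cycle TE xs)"

lemma is_cycle_drop:
  assumes "distinct xs" "successively E xs" "i + 3 \<le> length xs" "E (last xs) (xs ! i)"
  shows "is_cycle E (drop i xs)"
proof -
  have "successively E (drop i xs)"
    using assms(2) successively_append_iff[of E "take i xs" "drop i xs"] by simp
  then show ?thesis
    using assms by (simp add: is_cycle_def hd_drop_conv_nth)
qed

lemma finite_tree_has_leaf:
  assumes tree: "finite_tree N TE" and "x0 \<in> N" "x1 \<in> N" "x0 \<noteq> x1"
  shows "\<exists>x y. x \<in> N \<and> TE x y \<and> (\<forall>w. TE x w \<longrightarrow> w = y)"
proof -
  have fin: "finite N" and g: "graph N TE" and acyclic: "\<And>xs. \<not> is_cycle TE xs"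
    using tree by (auto simp: finite_tree_def)
  define path where "path xs \<longleftrightarrow> distinct xs \<and> set xs \<subseteq> N \<and> 2 \<le> length xs \<and> successively TE xs"
    for xs
  have "(induced_rel TE N)\<^sup>*\<^sup>* x0 x1"
    using tree assms(2,3) by (auto simp: finite_tree_def connected_on_iff_rtranclp)
  then obtain z where "induced_rel TE N x0 z"
    using assms(4) by (metis converse_rtranclpE)
  then have "TE x0 z" "z \<in> N"
    by (simp_all add: induced_rel_def)
  then have "path [x0, z]"
    using graph_edgeD(3)[OF g] \<open>x0 \<in> N\<close> by (simp add: path_def)
  moreover have "length xs < card N + 1" if "path xs" for xs
    using that card_mono[OF fin, of "set xs"] distinct_card[of xs] by (simp add: path_def)
  ultimately obtain xs where xs: "path xs" and longest: "\<And>ys. path ys \<Longrightarrow> length ys \<le> length xs"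
    using ex_has_greatest_nat[of path "[x0, z]" length] by blast
  define n where "n = length xs"
  have n: "2 \<le> n" "xs \<noteq> []"
    using xs by (auto simp: path_def n_def)
  then have last_xs: "last xs = xs ! (n - 1)"
    by (simp add: last_conv_nth n_def)
  have nbr: "w = xs ! (n - 2)" if "TE (last xs) w" for w
  proof -
    have "w \<in> N" and "w \<noteq> last xs"
      using graph_edgeD[OF g that] by auto
    have "w \<in> set xs"
    proof (rule ccontr)
      assume "w \<notin> set xs"
      then have "path (xs @ [w])"
        using xs \<open>w \<in> N\<close> that by (simp add: path_def successively_append_iff)
      then show False
        using longest by fastforce
    qed
    then obtain i where i: "i < n" "xs ! i = w"
      by (auto simp: in_set_conv_nth n_def)
    have "\<not> i + 3 \<le> n"
    proof
      assume "i + 3 \<le> n"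
      then have "is_cycle TE (drop i xs)"
        using is_cycle_drop[of xs TE i] xs that i(2) by (simp add: path_def n_def)
      then show False
        using acyclic by blast
    qed
    moreover have "i \<noteq> n - 1"
      using i \<open>w \<noteq> last xs\<close> last_xs by auto
    ultimately have "i = n - 2"
      using i(1) by linarith
    then show ?thesis
      using i(2) by simp
  qed
  have "Suc (n - 2) = n - 1" "Suc (n - 2) < length xs"
    using n by (auto simp: n_def)
  then have "TE (xs ! (n - 2)) (last xs)"
    using successively_nth[of TE xs "n - 2"] xs last_xs by (simp add: path_def)
  then have "TE (last xs) (xs ! (n - 2))"
    by (rule graph_edgeD(4)[OF g])
  moreover have "last xs \<in> N"
    using xs n by (auto simp: path_def)
  ultimately show ?thesis
    using nbr by blast
qed

lemma rtranclp_induced_rel_endpoint: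
  "(induced_rel E X)\<^sup>*\<^sup>* a b \<Longrightarrow> a = b \<or> b \<in> X"
  by (induction rule: rtranclp_induct) (auto simp: induced_rel_def)

text \<open>A walk from a to b inside X may only enter the leaf x from its neighbour y and must return
  to y; the second disjunct records a walk that currently ends in x.\<close>

lemma rtranclp_induced_rel_avoid_leaf:
  assumes sym: "symp TE" and leaf: "\<forall>w. TE x w \<longrightarrow> w = y"
    and "(induced_rel TE X)\<^sup>*\<^sup>* a b" "a \<noteq> x"
  shows "(induced_rel TE (X - {x}))\<^sup>*\<^sup>* a b \<or> (b = x \<and> (induced_rel TE (X - {x}))\<^sup>*\<^sup>* a y)"
  using assms(3)
proof (induction rule: rtranclp_induct)
  case (step b c)
  have "TE b c" "b \<in> X"
    using step.hyps(2) by (simp_all add: induced_rel_def)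
  from step.IH show ?case
  proof
    assume ab: "(induced_rel TE (X - {x}))\<^sup>*\<^sup>* a b"
    then have "b \<in> X - {x}"
      using rtranclp_induced_rel_endpoint[OF ab] \<open>a \<noteq> x\<close> \<open>b \<in> X\<close> by auto
    show ?thesis
    proof (cases "c = x")
      case True
      then have "b = y"
        using leaf sympD[OF sym \<open>TE b c\<close>] by blast
      with ab True show ?thesis by simp
    next
      case False
      then have "induced_rel TE (X - {x}) b c"
        using step.hyps(2) \<open>b \<in> X - {x}\<close> by (simp add: induced_rel_def)
      with ab show ?thesis by (simp add: rtranclp.rtrancl_into_rtrancl)
    qed
  next
    assume "b = x \<and> (induced_rel TE (X - {x}))\<^sup>*\<^sup>* a y"
    moreover have "c = y"
      using calculation leaf \<open>TE b c\<close> by blast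
    ultimately show ?thesis by simp
  qed
qed simp

lemma connected_on_remove_leaf:
  assumes "symp TE" "\<forall>w. TE x w \<longrightarrow> w = y" "connected_on TE X"
  shows "connected_on TE (X - {x})"
  using assms rtranclp_induced_rel_avoid_leaf[OF assms(1,2)]
  unfolding connected_on_iff_rtranclp by blast

lemma connected_on_leaf_neighbour:
  assumes "connected_on TE X" "x \<in> X" "z \<in> X" "z \<noteq> x" "\<forall>w. TE x w \<longrightarrow> w = y"
  shows "y \<in> X"
proof -
  have "(induced_rel TE X)\<^sup>*\<^sup>* x z"
    using assms(1-3) by (simp add: connected_on_iff_rtranclp)
  then obtain w where "induced_rel TE X x w"
    using assms(4) by (metis converse_rtranclpE)
  then show ?thesis
    using assms(5) by (auto simp: induced_rel_def)
qed

lemma finite_tree_remove_leaf: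
  assumes tree: "finite_tree N TE" and "TE x y" "\<forall>w. TE x w \<longrightarrow> w = y"
  shows "finite_tree (N - {x}) (induced_rel TE (N - {x}))"
proof -
  have g: "graph N TE"
    using tree by (simp add: finite_tree_def)
  have "y \<in> N - {x}"
    using graph_edgeD[OF g \<open>TE x y\<close>] by simp
  moreover have "connected_on TE (N - {x})"
    using connected_on_remove_leaf[OF graph_symp[OF g] assms(3)] tree
    by (simp add: finite_tree_def)
  moreover have "is_cycle TE xs" if "is_cycle (induced_rel TE (N - {x})) xs" for xs
    using that by (auto simp: is_cycle_def induced_rel_def elim: successively_mono)
  moreover have "graph (N - {x}) (induced_rel TE (N - {x}))"
    using graph_edgeD(3,4)[OF g] by (auto simp: graph_def induced_rel_def)
  ultimately show ?thesis
    using tree by (auto simp: finite_tree_def connected_on_induced_rel_iff)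
qed

lemma subtree_remove_leaf:
  assumes g: "graph N TE" and leaf: "\<forall>w. TE x w \<longrightarrow> w = y"
    and "T \<subseteq> N" "T \<noteq> {}" "T \<noteq> {x}" "connected_on TE T"
  shows "T - {x} \<subseteq> N - {x} \<and> T - {x} \<noteq> {} \<and> connected_on (induced_rel TE (N - {x})) (T - {x})"
proof -
  have sub: "T - {x} \<subseteq> N - {x}"
    using \<open>T \<subseteq> N\<close> by blast
  moreover have "T - {x} \<noteq> {}"
    using \<open>T \<noteq> {}\<close> \<open>T \<noteq> {x}\<close> by blast
  moreover have "connected_on TE (T - {x})"
    using connected_on_remove_leaf[OF graph_symp[OF g] leaf \<open>connected_on TE T\<close>] .
  ultimately show ?thesis
    by (simp add: connected_on_induced_rel_iff[OF sub])
qed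

lemma subtrees_remove_leaf_meet:
  assumes g: "graph N TE" and "TE x y" and leaf: "\<forall>w. TE x w \<longrightarrow> w = y"
    and "connected_on TE T" "connected_on TE T'" "T \<noteq> {x}" "T' \<noteq> {x}" "T \<inter> T' \<noteq> {}"
  shows "(T - {x}) \<inter> (T' - {x}) \<noteq> {}"
proof (cases "x \<in> T \<inter> T'")
  case True
  have "y \<in> X" if conn: "connected_on TE X" and "x \<in> X" "X \<noteq> {x}" for X
  proof -
    obtain z where "z \<in> X" "z \<noteq> x"
      using \<open>x \<in> X\<close> \<open>X \<noteq> {x}\<close> by auto
    then show ?thesis
      using connected_on_leaf_neighbour[OF conn \<open>x \<in> X\<close> _ _ leaf] by blast
  qed
  then have "y \<in> T" "y \<in> T'"
    using True assms(4-7) by simp_all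
  moreover have "y \<noteq> x"
    using graph_edgeD(3)[OF g \<open>TE x y\<close>] by simp
  ultimately show ?thesis
    by blast
next
  case False
  then show ?thesis
    using \<open>T \<inter> T' \<noteq> {}\<close> by blast
qed

text \<open>Induction on the tree: delete a leaf x. Unless some subtree is {x} (and then x lies in all
  of them), the subtrees stay nonempty, connected and pairwise intersecting.\<close>

lemma finite_tree_Helly:
  assumes "finite_tree N TE"
    and "\<forall>i\<in>I. T i \<subseteq> N \<and> T i \<noteq> {} \<and> connected_on TE (T i)"
    and "\<forall>i\<in>I. \<forall>j\<in>I. T i \<inter> T j \<noteq> {}"
  shows "\<exists>x\<in>N. \<forall>i\<in>I. x \<in> T i"
  using assms
proof (induction "card N" arbitrary: N TE T rule: less_induct)
  case less
  note tree = less.prems(1) and subtrees = less.prems(2) and meet = less.prems(3)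
  show ?case
  proof (cases "\<exists>x0. N = {x0}")
    case True
    then show ?thesis
      using subtrees by (metis subset_singletonD singletonI)
  next
    case False
    obtain x0 where "x0 \<in> N"
      using tree by (auto simp: finite_tree_def)
    moreover obtain x1 where "x1 \<in> N" "x1 \<noteq> x0"
      using False calculation by auto
    ultimately obtain x y where x: "x \<in> N" "TE x y" and leaf: "\<forall>w. TE x w \<longrightarrow> w = y"
      using finite_tree_has_leaf[OF tree] by blast
    have g: "graph N TE"
      using tree by (simp add: finite_tree_def)
    show ?thesis
    proof (cases "\<exists>i\<in>I. T i = {x}")
      case True
      then obtain i where "i \<in> I" "T i = {x}" ..
      then have "x \<in> T j" if "j \<in> I" for j
        using meet[rule_format, OF \<open>i \<in> I\<close> that] by auto
      then show ?thesis
        using x(1) by blast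
    next
      case False
      have "card (N - {x}) < card N"
        using tree x(1) card_Diff1_less[of N x] by (simp add: finite_tree_def)
      moreover have "finite_tree (N - {x}) (induced_rel TE (N - {x}))"
        using finite_tree_remove_leaf[OF tree x(2) leaf] .
      moreover have "\<forall>i\<in>I. T i - {x} \<subseteq> N - {x} \<and> T i - {x} \<noteq> {} \<and>
          connected_on (induced_rel TE (N - {x})) (T i - {x})"
      proof
        fix i assume "i \<in> I"
        then show "T i - {x} \<subseteq> N - {x} \<and> T i - {x} \<noteq> {} \<and>
            connected_on (induced_rel TE (N - {x})) (T i - {x})"
          using subtree_remove_leaf[OF g leaf] subtrees False by simp
      qed
      moreover have "\<forall>i\<in>I. \<forall>j\<in>I. (T i - {x}) \<inter> (T j - {x}) \<noteq> {}"
      proof (intro ballI)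
        fix i j assume "i \<in> I" "j \<in> I"
        then show "(T i - {x}) \<inter> (T j - {x}) \<noteq> {}"
          using subtrees_remove_leaf_meet[OF g x(2) leaf] subtrees meet False by simp
      qed
      ultimately have "\<exists>z\<in>N - {x}. \<forall>i\<in>I. z \<in> T i - {x}"
        by (rule less.hyps)
      then show ?thesis
        by blast
    qed
  qed
qed

section \<open>A clique minor bounds the treewidth from below\<close>

lemma tree_decomp_finite_tree: "tree_decomp V E N TE B \<Longrightarrow> finite_tree N TE"
  by (simp add: tree_decomp_def finite_tree_def)

lemma
  assumes "tree_decomp V E N TE B"
  shows tree_decomp_bag_subset: "x \<in> N \<Longrightarrow> B x \<subseteq> V"
    and tree_decomp_covers_vertex: "v \<in> V \<Longrightarrow> \<exists>x\<in>N. v \<in> B x"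
    and tree_decomp_covers_edge: "u \<in> V \<Longrightarrow> v \<in> V \<Longrightarrow> E u v \<Longrightarrow> \<exists>x\<in>N. u \<in> B x \<and> v \<in> B x"
    and tree_decomp_connected_nodes: "v \<in> V \<Longrightarrow> connected_on TE {x\<in>N. v \<in> B x}"
  using assms by (simp_all add: tree_decomp_def)

lemma tree_decomp_trivial: "tree_decomp V E {0} (\<lambda>_ _. False) (\<lambda>_. V)"
proof -
  have "\<not> is_cycle (\<lambda>_ _. False) xs" for xs :: "nat list"
    unfolding is_cycle_def by (cases xs rule: remdups_adj.cases) auto
  moreover have "connected_on (\<lambda>_ _. False) {0::nat}"
    unfolding connected_on_def by (intro ballI exI[of _ "[0]"]) auto
  ultimately show ?thesis
    by (auto simp: tree_decomp_def graph_def)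
qed

lemma treewidth_attained:
  "\<exists>N TE B. tree_decomp V E N TE B \<and> (\<forall>x\<in>N. card (B x) \<le> treewidth V E + 1)"
proof -
  have "tree_decomp V E {0} (\<lambda>_ _. False) (\<lambda>_. V) \<and> (\<forall>x\<in>{0::nat}. card V \<le> card V + 1)"
    using tree_decomp_trivial by simp
  then have "\<exists>k N TE B. tree_decomp V E N TE B \<and> (\<forall>x\<in>N. card (B x) \<le> k + 1)"
    by (intro exI)
  then show ?thesis
    unfolding treewidth_def by (rule LeastI_ex)
qed

lemma connected_on_nodes_meeting:
  assumes td: "tree_decomp V E N TE B" and "C \<subseteq> V" and "connected_on E C"
  shows "connected_on TE {x\<in>N. B x \<inter> C \<noteq> {}}"
proof -
  define T where "T = {x\<in>N. B x \<inter> C \<noteq> {}}"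
  have same_vertex: "(induced_rel TE T)\<^sup>*\<^sup>* x x'"
    if "v \<in> C" "x \<in> N" "x' \<in> N" "v \<in> B x" "v \<in> B x'" for v x x'
  proof -
    have "connected_on TE {x\<in>N. v \<in> B x}"
      using tree_decomp_connected_nodes[OF td] \<open>C \<subseteq> V\<close> that(1) by blast
    then have "(induced_rel TE {x\<in>N. v \<in> B x})\<^sup>*\<^sup>* x x'"
      using that by (simp add: connected_on_iff_rtranclp)
    then show ?thesis
      by (rule rtranclp_induced_rel_mono) (use that(1) in \<open>auto simp: T_def\<close>)
  qed
  have along_path: "(induced_rel TE T)\<^sup>*\<^sup>* x x'"
    if path: "(induced_rel E C)\<^sup>*\<^sup>* u u'" and "u \<in> C" "x \<in> N" "u \<in> B x" "x' \<in> N" "u' \<in> B x'"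
    for u u' x x'
    using path that(5,6)
  proof (induction arbitrary: x' rule: rtranclp_induct)
    case base
    then show ?case
      using same_vertex that(2-4) by blast
  next
    case (step v w)
    then have "v \<in> C" "w \<in> C" "E v w"
      by (simp_all add: induced_rel_def)
    then obtain z where z: "z \<in> N" "v \<in> B z" "w \<in> B z"
      using tree_decomp_covers_edge[OF td] \<open>C \<subseteq> V\<close> by blast
    then have "(induced_rel TE T)\<^sup>*\<^sup>* x z"
      using step.IH by blast
    also have "(induced_rel TE T)\<^sup>*\<^sup>* z x'"
      using same_vertex[of w z x'] z step.prems \<open>w \<in> C\<close> by blast
    finally show ?case .
  qed
  show ?thesis
    unfolding connected_on_iff_rtranclp T_def[symmetric]
  proof (intro ballI)
    fix x x' assume "x \<in> T" "x' \<in> T"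
    then obtain u u' where "u \<in> B x \<inter> C" "u' \<in> B x' \<inter> C" "x \<in> N" "x' \<in> N"
      by (auto simp: T_def)
    moreover from this have "(induced_rel E C)\<^sup>*\<^sup>* u u'"
      using \<open>connected_on E C\<close> by (simp add: connected_on_iff_rtranclp)
    ultimately show "(induced_rel TE T)\<^sup>*\<^sup>* x x'"
      using along_path by blast
  qed
qed

lemma clique_minor_le_treewidth:
  assumes "finite V"
    and branch_sets: "\<forall>i\<in>I. C i \<subseteq> V \<and> C i \<noteq> {} \<and> connected_on E (C i)"
    and disjoint: "\<forall>i\<in>I. \<forall>j\<in>I. i \<noteq> j \<longrightarrow> C i \<inter> C j = {}"
    and touching: "\<forall>i\<in>I. \<forall>j\<in>I. i \<noteq> j \<longrightarrow> (\<exists>u\<in>C i. \<exists>v\<in>C j. E u v)"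
  shows "card I \<le> treewidth V E + 1"
proof -
  obtain N TE B where td: "tree_decomp V E N TE B"
    and width: "\<forall>x\<in>N. card (B x) \<le> treewidth V E + 1"
    using treewidth_attained[of V E] by (elim exE conjE)
  define T where "T i = {x\<in>N. B x \<inter> C i \<noteq> {}}" for i
  have "\<forall>i\<in>I. T i \<subseteq> N \<and> T i \<noteq> {} \<and> connected_on TE (T i)"
  proof
    fix i assume "i \<in> I"
    then obtain v where "v \<in> C i" "C i \<subseteq> V" "connected_on E (C i)"
      using branch_sets by blast
    moreover from this obtain x where "x \<in> N" "v \<in> B x"
      using tree_decomp_covers_vertex[OF td] by blast
    ultimately show "T i \<subseteq> N \<and> T i \<noteq> {} \<and> connected_on TE (T i)"
      using connected_on_nodes_meeting[OF td] by (auto simp: T_def)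
  qed
  moreover have "\<forall>i\<in>I. \<forall>j\<in>I. T i \<inter> T j \<noteq> {}"
  proof (intro ballI)
    fix i j assume "i \<in> I" "j \<in> I"
    then obtain u v where uv: "u \<in> C i" "v \<in> C j" "u = v \<or> E u v" and "u \<in> V" "v \<in> V"
      using branch_sets touching by (cases "i = j") blast+
    then obtain x where "x \<in> N" "u \<in> B x" "v \<in> B x"
      using tree_decomp_covers_vertex[OF td \<open>u \<in> V\<close>] tree_decomp_covers_edge[OF td \<open>u \<in> V\<close> \<open>v \<in> V\<close>]
      by blast
    then show "T i \<inter> T j \<noteq> {}"
      using uv by (auto simp: T_def)
  qed
  ultimately have "\<exists>x\<in>N. \<forall>i\<in>I. x \<in> T i"
    by (rule finite_tree_Helly[OF tree_decomp_finite_tree[OF td]])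
  then obtain x where x: "x \<in> N" "\<forall>i\<in>I. B x \<inter> C i \<noteq> {}"
    by (auto simp: T_def)
  define pick where "pick i = (SOME v. v \<in> B x \<inter> C i)" for i
  have pick: "pick i \<in> B x \<inter> C i" if "i \<in> I" for i
  proof -
    have "\<exists>v. v \<in> B x \<inter> C i"
      using x(2) that by blast
    then show ?thesis
      unfolding pick_def by (rule someI_ex)
  qed
  have "inj_on pick I"
  proof (rule inj_onI)
    fix i j assume "i \<in> I" "j \<in> I" "pick i = pick j"
    show "i = j"
    proof (rule ccontr)
      assume "i \<noteq> j"
      then have "C i \<inter> C j = {}"
        using disjoint \<open>i \<in> I\<close> \<open>j \<in> I\<close> by blast
      moreover have "pick i \<in> C i \<inter> C j"
        using pick[OF \<open>i \<in> I\<close>] pick[OF \<open>j \<in> I\<close>] \<open>pick i = pick j\<close> by simp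
      ultimately show False
        by blast
    qed
  qed
  moreover have "finite (B x)"
    using tree_decomp_bag_subset[OF td x(1)] \<open>finite V\<close> by (rule finite_subset)
  moreover have "pick ` I \<subseteq> B x"
    using pick by blast
  ultimately have "card I \<le> card (B x)"
    by (intro card_inj_on_le)
  also have "\<dots> \<le> treewidth V E + 1"
    using width x(1) by blast
  finally show ?thesis .
qed

section \<open>Paths along a linear order\<close>

lemma card_interval_split_less:
  assumes "finite L"
    and irrefl: "\<forall>u\<in>L. \<not> lt u u"
    and trans: "\<forall>u\<in>L. \<forall>v\<in>L. \<forall>w\<in>L. lt u v \<longrightarrow> lt v w \<longrightarrow> lt u w"
    and "u \<in> L" "v \<in> L" "w \<in> L" "lt u w" "lt w v"
  shows "card {x\<in>L. lt u x \<and> lt x w} < card {x\<in>L. lt u x \<and> lt x v}"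
    and "card {x\<in>L. lt w x \<and> lt x v} < card {x\<in>L. lt u x \<and> lt x v}"
proof -
  have "{x\<in>L. lt u x \<and> lt x w} \<subseteq> {x\<in>L. lt u x \<and> lt x v}"
  proof
    fix x assume "x \<in> {x\<in>L. lt u x \<and> lt x w}"
    then show "x \<in> {x\<in>L. lt u x \<and> lt x v}"
      using trans[rule_format, of x w v] assms(5-8) by simp
  qed
  moreover have "{x\<in>L. lt w x \<and> lt x v} \<subseteq> {x\<in>L. lt u x \<and> lt x v}"
  proof
    fix x assume "x \<in> {x\<in>L. lt w x \<and> lt x v}"
    then show "x \<in> {x\<in>L. lt u x \<and> lt x v}"
      using trans[rule_format, of u w x] assms(4,6,7) by simp
  qed
  moreover have "w \<in> {x\<in>L. lt u x \<and> lt x v}" "w \<notin> {x\<in>L. lt u x \<and> lt x w}"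
    "w \<notin> {x\<in>L. lt w x \<and> lt x v}"
    using assms(6-8) irrefl by simp_all
  ultimately have "{x\<in>L. lt u x \<and> lt x w} \<subset> {x\<in>L. lt u x \<and> lt x v}"
    "{x\<in>L. lt w x \<and> lt x v} \<subset> {x\<in>L. lt u x \<and> lt x v}"
    by blast+
  moreover have "finite {x\<in>L. lt u x \<and> lt x v}"
    using \<open>finite L\<close> by simp
  ultimately show "card {x\<in>L. lt u x \<and> lt x w} < card {x\<in>L. lt u x \<and> lt x v}"
    and "card {x\<in>L. lt w x \<and> lt x v} < card {x\<in>L. lt u x \<and> lt x v}"
    by (simp_all add: psubset_card_mono)
qed

lemma rtranclp_induced_rel_if_consecutive_adjacent:
  assumes "finite L"
    and "\<forall>u\<in>L. \<not> lt u u"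
    and "\<forall>u\<in>L. \<forall>v\<in>L. \<forall>w\<in>L. lt u v \<longrightarrow> lt v w \<longrightarrow> lt u w"
    and adjacent: "\<forall>u\<in>L. \<forall>v\<in>L. consecutive lt L u v \<longrightarrow> E u v \<and> E v u"
    and "u \<in> L" "v \<in> L" "lt u v"
  shows "(induced_rel E L)\<^sup>*\<^sup>* u v \<and> (induced_rel E L)\<^sup>*\<^sup>* v u"
proof -
  let ?R = "(induced_rel E L)\<^sup>*\<^sup>*"
  define between where "between u v = {w\<in>L. lt u w \<and> lt w v}" for u v
  show ?thesis
    using assms(5-7)
  proof (induction "card (between u v)" arbitrary: u v rule: less_induct)
    case less
    show ?case
    proof (cases "between u v = {}")
      case True
      then have "consecutive lt L u v"
        using less.prems(3) by (auto simp: consecutive_def between_def)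
      then have "induced_rel E L u v" "induced_rel E L v u"
        using adjacent less.prems(1,2) by (simp_all add: induced_rel_def)
      then show ?thesis
        by (simp add: r_into_rtranclp)
    next
      case False
      then obtain w where w: "w \<in> L" "lt u w" "lt w v"
        by (auto simp: between_def)
      have "card (between u w) < card (between u v)" "card (between w v) < card (between u v)"
        using card_interval_split_less[OF assms(1-3) less.prems(1,2) w] by (simp_all add: between_def)
      then have "?R u w \<and> ?R w u" "?R w v \<and> ?R v w"
        using less.hyps[OF _ less.prems(1) w(1,2)] less.hyps[OF _ w(1) less.prems(2) w(3)] by blast+
      then show ?thesis
        using rtranclp_trans[of "induced_rel E L" u w v] rtranclp_trans[of "induced_rel E L" v w u]
        by blast
    qed
  qed
qed

lemma connected_on_if_consecutive_adjacent:
  assumes "finite L"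
    and "\<forall>u\<in>L. \<not> lt u u"
    and "\<forall>u\<in>L. \<forall>v\<in>L. \<forall>w\<in>L. lt u v \<longrightarrow> lt v w \<longrightarrow> lt u w"
    and total: "\<forall>u\<in>L. \<forall>v\<in>L. u = v \<or> lt u v \<or> lt v u"
    and "\<forall>u\<in>L. \<forall>v\<in>L. consecutive lt L u v \<longrightarrow> E u v \<and> E v u"
  shows "connected_on E L"
  unfolding connected_on_iff_rtranclp
proof (intro ballI)
  fix u v assume "u \<in> L" "v \<in> L"
  then consider "u = v" | "lt u v" | "lt v u"
    using total by blast
  then show "(induced_rel E L)\<^sup>*\<^sup>* u v"
    using rtranclp_induced_rel_if_consecutive_adjacent[OF assms(1-3,5)] \<open>u \<in> L\<close> \<open>v \<in> L\<close>
    by cases auto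
qed

lemma card_neighbours_le_2_if_adjacent_consecutive:
  assumes "finite L" and total: "\<forall>u\<in>L. \<forall>v\<in>L. u = v \<or> lt u v \<or> lt v u"
    and adjacent: "\<forall>u\<in>L. \<forall>v\<in>L. E u v \<longrightarrow> consecutive lt L u v \<or> consecutive lt L v u"
    and "v \<in> L"
  shows "card {w\<in>L. E v w} \<le> 2"
proof -
  define succs where "succs = {w\<in>L. consecutive lt L v w}"
  define preds where "preds = {w\<in>L. consecutive lt L w v}"
  have "finite succs" "finite preds"
    using \<open>finite L\<close> by (simp_all add: succs_def preds_def)
  have "card succs \<le> Suc 0"
    unfolding card_le_Suc0_iff_eq[OF \<open>finite succs\<close>]
  proof (intro ballI)
    fix a b assume "a \<in> succs" "b \<in> succs"
    then have "a \<in> L" "b \<in> L" "consecutive lt L v a" "consecutive lt L v b"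
      by (simp_all add: succs_def)
    then show "a = b"
      using total[rule_format, of a b] unfolding consecutive_def by blast
  qed
  moreover have "card preds \<le> Suc 0"
    unfolding card_le_Suc0_iff_eq[OF \<open>finite preds\<close>]
  proof (intro ballI)
    fix a b assume "a \<in> preds" "b \<in> preds"
    then have "a \<in> L" "b \<in> L" "consecutive lt L a v" "consecutive lt L b v"
      by (simp_all add: preds_def)
    then show "a = b"
      using total[rule_format, of a b] unfolding consecutive_def by blast
  qed
  moreover have "{w\<in>L. E v w} \<subseteq> succs \<union> preds"
    using adjacent \<open>v \<in> L\<close> by (auto simp: succs_def preds_def)
  then have "card {w\<in>L. E v w} \<le> card (succs \<union> preds)"
    using \<open>finite succs\<close> \<open>finite preds\<close> by (intro card_mono) simp_all
  ultimately show ?thesis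
    using card_Un_le[of succs preds] by linarith
qed

section \<open>Choosing sparsely connected layers\<close>

lemma girth_at_least_5_common_neighbour_Uniq:
  assumes g: "graph V E" and girth: "girth_at_least E 5" and "u \<noteq> w"
  shows "\<exists>\<^sub>\<le>\<^sub>1v. E v u \<and> E v w"
proof (rule Uniq_I, rule ccontr)
  fix a b assume a: "E a u \<and> E a w" and b: "E b u \<and> E b w" and "b \<noteq> a"
  have "E u a" "E w b"
    using graph_edgeD(4)[OF g] a b by blast+
  moreover have "a \<noteq> u" "a \<noteq> w" "b \<noteq> u" "b \<noteq> w"
    using graph_edgeD(3)[OF g] a b by blast+
  ultimately have "is_cycle E [u, a, w, b]"
    using a b \<open>u \<noteq> w\<close> \<open>b \<noteq> a\<close> by (simp add: is_cycle_def)
  then have "5 \<le> length [u, a, w, b]"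
    using girth unfolding girth_at_least_def by blast
  then show False
    by simp
qed

lemma finite_if_Uniq:
  assumes "\<exists>\<^sub>\<le>\<^sub>1x. P x"
  shows "finite {x. P x}"
proof -
  obtain a where "{x. P x} \<subseteq> {a}"
    using assms subset_singleton_iff_Uniq[of "{x. P x}"] by auto
  then show ?thesis
    by (rule finite_subset) simp
qed

lemma finite_two_neighbours_in:
  assumes "finite F" "\<forall>u w. u \<noteq> w \<longrightarrow> finite {v. E v u \<and> E v w}"
  shows "finite {v. \<exists>u\<in>F. \<exists>w\<in>F. u \<noteq> w \<and> E v u \<and> E v w}"
proof -
  have "{v. \<exists>u\<in>F. \<exists>w\<in>F. u \<noteq> w \<and> E v u \<and> E v w} = (\<Union>u\<in>F. \<Union>w\<in>F - {u}. {v. E v u \<and> E v w})"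
    by blast
  then show ?thesis
    using assms by (simp add: finite_UN_I del: Diff_iff) (metis DiffD2 singletonI)
qed

definition at_most_one_earlier_neighbour :: "(nat \<Rightarrow> 'v set) \<Rightarrow> ('v \<Rightarrow> 'v \<Rightarrow> bool) \<Rightarrow> nat set \<Rightarrow> bool"
  where "at_most_one_earlier_neighbour L E I \<longleftrightarrow>
    (\<forall>i\<in>I. \<forall>v\<in>L i. \<exists>\<^sub>\<le>\<^sub>1u. u \<in> \<Union>(L ` {j\<in>I. j < i}) \<and> E v u)"

text \<open>The next layer is chosen beyond every layer containing a vertex with two neighbours in the
  union F of the layers chosen so far; there are finitely many such vertices because distinct
  vertices have finitely many common neighbours.\<close>

lemma exists_at_most_one_earlier_neighbour:
  fixes L :: "nat \<Rightarrow> 'v set"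
  assumes fin: "\<forall>n. finite (L n)" and disjoint: "\<forall>i j. i \<noteq> j \<longrightarrow> L i \<inter> L j = {}"
    and common: "\<forall>u w. u \<noteq> w \<longrightarrow> finite {v. E v u \<and> E v w}"
  shows "\<exists>I. finite I \<and> card I = k \<and> at_most_one_earlier_neighbour L E I"
  unfolding at_most_one_earlier_neighbour_def
proof (induction k)
  case 0
  show ?case
    by (intro exI[of _ "{}"]) simp
next
  case (Suc k)
  then obtain I where I: "finite I" "card I = k"
    and sparse: "\<forall>i\<in>I. \<forall>v\<in>L i. \<exists>\<^sub>\<le>\<^sub>1u. u \<in> \<Union>(L ` {j\<in>I. j < i}) \<and> E v u"
    by blast
  define F where "F = \<Union>(L ` I)"
  define bad where "bad = {v. \<exists>u\<in>F. \<exists>w\<in>F. u \<noteq> w \<and> E v u \<and> E v w}"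
  have "finite F"
    using I(1) fin by (simp add: F_def)
  then have "finite bad"
    unfolding bad_def using common by (rule finite_two_neighbours_in)
  moreover have "finite {n. v \<in> L n}" for v
  proof (intro finite_if_Uniq Uniq_I)
    fix i j assume "v \<in> L i" "v \<in> L j"
    then have "L j \<inter> L i \<noteq> {}"
      by blast
    then show "j = i"
      using disjoint by blast
  qed
  ultimately have "finite (\<Union>v\<in>bad. {n. v \<in> L n})"
    by blast
  then obtain n where "(\<Union>v\<in>bad. {n. v \<in> L n}) \<union> I \<subseteq> {..<n}"
    using I(1) finite_nat_bounded by (meson finite_UnI)
  then have "n \<notin> I" and below: "\<forall>i\<in>I. i < n" and good: "L n \<inter> bad = {}"
    by auto
  have "\<forall>i\<in>insert n I. \<forall>v\<in>L i. \<exists>\<^sub>\<le>\<^sub>1u. u \<in> \<Union>(L ` {j\<in>insert n I. j < i}) \<and> E v u"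
  proof (intro ballI)
    fix i v assume i: "i \<in> insert n I" and v: "v \<in> L i"
    show "\<exists>\<^sub>\<le>\<^sub>1u. u \<in> \<Union>(L ` {j\<in>insert n I. j < i}) \<and> E v u"
    proof (cases "i = n")
      case True
      then have earlier: "\<Union>(L ` {j\<in>insert n I. j < i}) = F"
        using below by (auto simp: F_def)
      have "v \<notin> bad"
        using good v True by blast
      then show ?thesis
        unfolding earlier bad_def by (blast intro: Uniq_I)
    next
      case False
      then have "i \<in> I" and "{j\<in>insert n I. j < i} = {j\<in>I. j < i}"
        using i below by auto
      then show ?thesis
        using sparse v by simp
    qed
  qed
  then show ?case
    using I \<open>n \<notin> I\<close> by (intro exI[of _ "insert n I"]) simp
qed

text \<open>The vertex of the copy of H whose image has the largest level has at least d neighbours,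
  all mapped to vertices of level at most its own.\<close>

lemma H_free_if_few_lower_neighbours:
  fixes lev :: "'v \<Rightarrow> 'b::linorder"
  assumes "finite VH" "VH \<noteq> {}" "min_degree_at_least VH EH d" "finite S"
    and lower: "\<forall>v\<in>S. card {u\<in>S. E v u \<and> lev u \<le> lev v} < d"
  shows "H_free VH EH S E"
  unfolding H_free_def induced_copy_def
proof
  assume "\<exists>f. inj_on f VH \<and> f ` VH \<subseteq> S \<and> (\<forall>a\<in>VH. \<forall>b\<in>VH. EH a b \<longleftrightarrow> E (f a) (f b))"
  then obtain f where inj: "inj_on f VH" and into: "f ` VH \<subseteq> S"
    and edges: "\<forall>a\<in>VH. \<forall>b\<in>VH. EH a b \<longleftrightarrow> E (f a) (f b)"
    by blast
  have "Max ((\<lambda>b. lev (f b)) ` VH) \<in> (\<lambda>b. lev (f b)) ` VH"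
    using \<open>finite VH\<close> \<open>VH \<noteq> {}\<close> by (intro Max_in) simp_all
  then obtain a where a: "a \<in> VH" "lev (f a) = Max ((\<lambda>b. lev (f b)) ` VH)"
    by (metis imageE)
  have "f ` {b\<in>VH. EH a b} \<subseteq> {u\<in>S. E (f a) u \<and> lev u \<le> lev (f a)}"
    using a into edges \<open>finite VH\<close> by auto
  then have "card (f ` {b\<in>VH. EH a b}) \<le> card {u\<in>S. E (f a) u \<and> lev u \<le> lev (f a)}"
    using \<open>finite S\<close> by (intro card_mono) simp_all
  also have "\<dots> < d"
    using lower into a(1) by blast
  finally have "card (f ` {b\<in>VH. EH a b}) < d" .
  moreover have "card (f ` {b\<in>VH. EH a b}) = card {b\<in>VH. EH a b}"
    using inj by (intro card_image) (auto intro: inj_on_subset)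
  moreover have "d \<le> card {b\<in>VH. EH a b}"
    using assms(3) a(1) by (simp add: min_degree_at_least_def)
  ultimately show False
    by simp
qed

lemma card_lower_neighbours_in_layers_le_3:
  fixes L :: "nat \<Rightarrow> 'v set" and lev :: "'v \<Rightarrow> nat"
  assumes fin: "\<forall>n. finite (L n)" and lev: "\<forall>n. \<forall>u\<in>L n. lev u = n"
    and within: "\<forall>n. \<forall>v\<in>L n. card {u\<in>L n. E v u} \<le> 2"
    and sparse: "at_most_one_earlier_neighbour L E I"
    and "finite I" "i \<in> I" "v \<in> L i"
  shows "card {u\<in>\<Union>(L ` I). E v u \<and> lev u \<le> lev v} \<le> 3"
proof -
  define earlier where "earlier = {u\<in>\<Union>(L ` {j\<in>I. j < i}). E v u}"
  have "finite earlier"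
    using fin \<open>finite I\<close> by (simp add: earlier_def)
  then have "card earlier \<le> Suc 0"
    using sparse \<open>i \<in> I\<close> \<open>v \<in> L i\<close>
    by (simp add: card_le_Suc0_iff_eq earlier_def Uniq_def at_most_one_earlier_neighbour_def)
  moreover have "card {u\<in>L i. E v u} \<le> 2"
    using within \<open>v \<in> L i\<close> by blast
  moreover have "{u\<in>\<Union>(L ` I). E v u \<and> lev u \<le> lev v} \<subseteq> {u\<in>L i. E v u} \<union> earlier"
  proof
    fix u assume "u \<in> {u\<in>\<Union>(L ` I). E v u \<and> lev u \<le> lev v}"
    then obtain j where "j \<in> I" "u \<in> L j" "E v u" "j \<le> i"
      using lev \<open>v \<in> L i\<close> by auto
    show "u \<in> {u\<in>L i. E v u} \<union> earlier"
    proof (cases "j = i")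
      case False
      then have "j \<in> {j\<in>I. j < i}"
        using \<open>j \<in> I\<close> \<open>j \<le> i\<close> by simp
      then show ?thesis
        using \<open>u \<in> L j\<close> \<open>E v u\<close> unfolding earlier_def by blast
    qed (use \<open>u \<in> L j\<close> \<open>E v u\<close> in simp)
  qed
  then have "card {u\<in>\<Union>(L ` I). E v u \<and> lev u \<le> lev v} \<le> card ({u\<in>L i. E v u} \<union> earlier)"
    using fin \<open>finite earlier\<close> by (intro card_mono) simp_all
  ultimately show ?thesis
    using card_Un_le[of "{u\<in>L i. E v u}" earlier] by linarith
qed

section \<open>Layered wheels\<close>

lemma layer_disjoint: "i \<noteq> j \<Longrightarrow> layer V r par i \<inter> layer V r par j = {}"
  by (auto simp: layer_def)

lemma depth_if_in_layer: "u \<in> layer V r par n \<Longrightarrow> depth r par u = n"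
  by (simp add: layer_def)

lemma proper_lw_layers_adjacent:
  "proper_lw V E r par \<Longrightarrow> i \<noteq> j \<Longrightarrow> \<exists>u\<in>layer V r par i. \<exists>v\<in>layer V r par j. E u v"
  by (simp add: proper_lw_def)

lemma proper_lw_layer_nonempty: "proper_lw V E r par \<Longrightarrow> layer V r par n \<noteq> {}"
  using proper_lw_layers_adjacent[of V E r par n "Suc n"] by auto

context
  fixes V E r par lt
  assumes wheel: "layered_wheel V E r par lt"
begin

lemma layered_wheel_graph: "graph V E"
  using wheel by (simp add: layered_wheel_def)

lemma layered_wheel_finite_layer: "finite (layer V r par n)"
  using wheel by (simp add: layered_wheel_def)

lemma layered_wheel_layer_order:
  shows "\<forall>u\<in>layer V r par n. \<not> lt u u"
    and "\<forall>u\<in>layer V r par n. \<forall>v\<in>layer V r par n. \<forall>w\<in>layer V r par n. lt u v \<longrightarrow> lt v w \<longrightarrow> lt u w"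
    and "\<forall>u\<in>layer V r par n. \<forall>v\<in>layer V r par n. u = v \<or> lt u v \<or> lt v u"
proof -
  have "plane_order V r par lt"
    using wheel by (simp add: layered_wheel_def)
  then have "(\<forall>u\<in>layer V r par n. \<not> lt u u) \<and>
      (\<forall>u\<in>layer V r par n. \<forall>v\<in>layer V r par n. \<forall>w\<in>layer V r par n. lt u v \<longrightarrow> lt v w \<longrightarrow> lt u w) \<and>
      (\<forall>u\<in>layer V r par n. \<forall>v\<in>layer V r par n. u = v \<or> lt u v \<or> lt v u)"
    unfolding plane_order_def by (elim conjE) (rule spec)
  then show "\<forall>u\<in>layer V r par n. \<not> lt u u"
    and "\<forall>u\<in>layer V r par n. \<forall>v\<in>layer V r par n. \<forall>w\<in>layer V r par n. lt u v \<longrightarrow> lt v w \<longrightarrow> lt u w"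
    and "\<forall>u\<in>layer V r par n. \<forall>v\<in>layer V r par n. u = v \<or> lt u v \<or> lt v u"
    by blast+
qed

lemma layered_wheel_layer_edges:
  "\<forall>u\<in>layer V r par n. \<forall>v\<in>layer V r par n.
     E u v \<longleftrightarrow> consecutive lt (layer V r par n) u v \<or> consecutive lt (layer V r par n) v u"
  using wheel by (simp add: layered_wheel_def)

lemma layered_wheel_connected_layer: "connected_on E (layer V r par n)"
proof -
  have "\<forall>u\<in>layer V r par n. \<forall>v\<in>layer V r par n.
      consecutive lt (layer V r par n) u v \<longrightarrow> E u v \<and> E v u"
    using layered_wheel_layer_edges[of n] by blast
  then show ?thesis
    by (rule connected_on_if_consecutive_adjacent[OF layered_wheel_finite_layer layered_wheel_layer_order])
qed

lemma layered_wheel_layer_degree: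
  "v \<in> layer V r par n \<Longrightarrow> card {u\<in>layer V r par n. E v u} \<le> 2"
proof (rule card_neighbours_le_2_if_adjacent_consecutive[OF layered_wheel_finite_layer
      layered_wheel_layer_order(3)])
  show "\<forall>u\<in>layer V r par n. \<forall>v\<in>layer V r par n.
      E u v \<longrightarrow> consecutive lt (layer V r par n) u v \<or> consecutive lt (layer V r par n) v u"
    using layered_wheel_layer_edges[of n] by blast
qed

lemma layered_wheel_selection:
  assumes "girth_at_least E 5"
  shows "\<exists>I. finite I \<and> card I = k \<and> at_most_one_earlier_neighbour (layer V r par) E I"
proof (rule exists_at_most_one_earlier_neighbour)
  show "\<forall>u w. u \<noteq> w \<longrightarrow> finite {v. E v u \<and> E v w}"
    using finite_if_Uniq girth_at_least_5_common_neighbour_Uniq[OF layered_wheel_graph assms]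
    by blast
  show "\<forall>n. finite (layer V r par n)"
    using layered_wheel_finite_layer by blast
  show "\<forall>i j. i \<noteq> j \<longrightarrow> layer V r par i \<inter> layer V r par j = {}"
    by (simp add: layer_disjoint)
qed

lemma layered_wheel_treewidth_layers:
  assumes "proper_lw V E r par" "finite I"
  shows "card I \<le> treewidth (\<Union>(layer V r par ` I)) E + 1"
proof (rule clique_minor_le_treewidth)
  show "finite (\<Union>(layer V r par ` I))"
    using \<open>finite I\<close> layered_wheel_finite_layer by simp
  show "\<forall>i\<in>I. layer V r par i \<subseteq> \<Union>(layer V r par ` I) \<and> layer V r par i \<noteq> {} \<and>
      connected_on E (layer V r par i)"
    using proper_lw_layer_nonempty[OF assms(1)] layered_wheel_connected_layer by blast
  show "\<forall>i\<in>I. \<forall>j\<in>I. i \<noteq> j \<longrightarrow> layer V r par i \<inter> layer V r par j = {}"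
    by (simp add: layer_disjoint)
  show "\<forall>i\<in>I. \<forall>j\<in>I. i \<noteq> j \<longrightarrow> (\<exists>u\<in>layer V r par i. \<exists>v\<in>layer V r par j. E u v)"
    using proper_lw_layers_adjacent[OF assms(1)] by blast
qed

lemma layered_wheel_H_free_layers:
  assumes "finite VH" "VH \<noteq> {}" "min_degree_at_least VH EH 4"
    and "finite I" "at_most_one_earlier_neighbour (layer V r par) E I"
  shows "H_free VH EH (\<Union>(layer V r par ` I)) E"
proof (rule H_free_if_few_lower_neighbours[where lev = "depth r par", OF assms(1-3)])
  show "finite (\<Union>(layer V r par ` I))"
    using \<open>finite I\<close> layered_wheel_finite_layer by simp
  show "\<forall>v\<in>\<Union>(layer V r par ` I).
      card {u\<in>\<Union>(layer V r par ` I). E v u \<and> depth r par u \<le> depth r par v} < 4"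
  proof
    fix v assume "v \<in> \<Union>(layer V r par ` I)"
    then obtain i where "i \<in> I" "v \<in> layer V r par i"
      by blast
    have "\<forall>n. finite (layer V r par n)"
      using layered_wheel_finite_layer by blast
    moreover have "\<forall>n. \<forall>u\<in>layer V r par n. depth r par u = n"
      by (simp add: depth_if_in_layer)
    moreover have "\<forall>n. \<forall>u\<in>layer V r par n. card {w\<in>layer V r par n. E u w} \<le> 2"
      using layered_wheel_layer_degree by blast
    ultimately have "card {u\<in>\<Union>(layer V r par ` I). E v u \<and> depth r par u \<le> depth r par v} \<le> 3"
      using card_lower_neighbours_in_layers_le_3[OF _ _ _ assms(5,4) \<open>i \<in> I\<close> \<open>v \<in> layer V r par i\<close>]
      by blast
    then show "card {u\<in>\<Union>(layer V r par ` I). E v u \<and> depth r par u \<le> depth r par v} < 4"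
      by simp
  qed
qed

end

theorem lemma5p3:
  fixes VH :: "'w set" and EH :: "'w \<Rightarrow> 'w \<Rightarrow> bool"
    and V :: "'v set" and E :: "'v \<Rightarrow> 'v \<Rightarrow> bool"
    and r :: 'v and par :: "'v \<Rightarrow> 'v" and lt :: "'v \<Rightarrow> 'v \<Rightarrow> bool"
    and t :: nat
  assumes "graph VH EH" and "finite VH" and "VH \<noteq> {}"
    and "girth_at_least EH 5" and "min_degree_at_least VH EH 4"
    and "layered_wheel V E r par lt" and "proper_lw V E r par"
    and "girth_at_least E 5"
  shows "\<exists>S\<subseteq>V. finite S \<and> H_free VH EH S E \<and> t \<le> treewidth S E"
proof -
  obtain I where I: "finite I" "card I = Suc t"
    and sparse: "at_most_one_earlier_neighbour (layer V r par) E I"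
    using layered_wheel_selection[OF assms(6,8)] by blast
  define S where "S = \<Union>(layer V r par ` I)"
  have "S \<subseteq> V"
    by (auto simp: S_def layer_def)
  moreover have "finite S"
    using I(1) layered_wheel_finite_layer[OF assms(6)] by (simp add: S_def)
  moreover have "H_free VH EH S E"
    unfolding S_def using layered_wheel_H_free_layers[OF assms(6,2,3,5) I(1) sparse] .
  moreover have "t \<le> treewidth S E"
    using layered_wheel_treewidth_layers[OF assms(6,7) I(1)] I(2) by (simp add: S_def)
  ultimately show ?thesis
    by blast
qed

end
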